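(* Let $f\in\mathcal B_k^{2+\nu}$ with $I=[0,1)$. Let $k'\le n$ and $m\ge 0$, and let $a_{k'}\dots a_n$ and $a'_n a'_{n+1}\dots a'_{n+m}$ be admissible words (consecutive indices $k',\dots,n$ and $n,\dots,n+m$ respectively) with $\pi_1(a_n)=\pi_1(a'_n)$. Then the word $a_{k'}\dots a_n a'_{n+1}\dots a'_{n+m}$ is admissible.
   Context: Let $\mathcal A$ be a finite alphabet with $d\ge 2$ elements and $I$ a bounded interval. A generalized interval exchange map (g.i.e.m.) is a bijection $f:I\to I$ together with a partition $\{I_\alpha\}_{\alpha\in\mathcal A}$ of $I$ into nonempty intervals of the form $[a,b)$ such that each $f|_{I_\alpha}$ is an orientation-preserving homeomorphism onto an interval. For intervals $J,U$ write $J<U$ if their interiors are disjoint and $x<y$ for all $x\in J$, $y\in U$. The combinatorial data of $f$ are the bijections $\pi_0,\pi_1:\mathcal A\to\{1,\dots,d\}$ with $I_\alpha<I_\beta\iff\pi_0(\alpha)<\pi_0(\beta)$ and $f(I_\alpha)<f(I_\beta)\iff\pi_1(\alpha)<\pi_1(\beta)$; they are assumed irreducible: $\pi_1\circ\pi_0^{-1}(\{1,\dots,j\})\neq\{1,\dots,j\}$ for $1\le j<d$. Rauzy–Veech renormalization: let $\alpha(\varepsilon)=\pi_\varepsilon^{-1}(d)$, $\varepsilon\in\{0,1\}$. If $|I_{\alpha(0)}|>|f(I_{\alpha(1)})|$, $f$ has type 0, winner $\alpha(0)$, loser $\alpha(1)$, and $I^1=I\setminus f(I_{\alpha(1)})$,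 $I^1_\alpha=I_\alpha$ for $\alpha\ne\alpha(0)$, $I^1_{\alpha(0)}=I_{\alpha(0)}\setminus f(I_{\alpha(1)})$. If $|I_{\alpha(0)}|<|f(I_{\alpha(1)})|$, $f$ has type 1, winner $\alpha(1)$, loser $\alpha(0)$, and $I^1=I\setminus I_{\alpha(0)}$, $I^1_\alpha=I_\alpha$ for $\alpha\ne\alpha(0),\alpha(1)$, $I^1_{\alpha(1)}=f^{-1}(f(I_{\alpha(1)})\setminus I_{\alpha(0)})$, $I^1_{\alpha(0)}=I_{\alpha(1)}\setminus I^1_{\alpha(1)}$. The renormalization $R(f):I^1\to I^1$ is the first return map of $f$ to $I^1$, regarded as a g.i.e.m. with partition $\{I^1_\alpha\}$. $f$ is infinitely renormalizable if $R^n(f)$ is defined for all $n$. Write $f_n=R^n(f)$ ($f_0=f$), $I^n$ its domain ($I^0=I$), $\{I^n_\alpha\}$ its partition, $\varepsilon_n$ its type, $\alpha_n(\varepsilon_n)$ and $\alpha_n(1-\varepsilon_n)$ its winner and loser; $q^n_\alpha$ is the first return time of $I^n_\alpha$ to $I^n$, so $f_n|_{I^n_\alpha}=f^{q^n_\alpha}$. $f$ has $k$-bounded combinatorics if it is infinitely renormalizable and for each $n$ and $\beta,\gamma\in\mathcal A$ there exist $n_1,p\ge 0$ with $|n-n_1|<k$, $|n-n_1-p|<k$, $\alpha_{n_1}(\varepsilon_{n_1})=\beta$, $\alpha_{n_1+p}(1-\varepsilon_{n_1+p})=\gamma$ and $\alpha_{n_1+i}(1-\varepsilon_{n_1+i})=\alpha_{n_1+i+1}(\varepsilon_{n_1+i+1})$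 for $0\le i<p$. $f$ has no connection if $f^m(\partial I_\alpha)\ne\partial I_\beta$ for all $m\ge1$ and $\alpha,\beta$ with $\pi_0(\beta)\ne1$, where $\partial[a,b)=\{a\}$. $f$ has genus one if it has at most two discontinuities. $\mathcal B_k^{2+\nu}$ ($k\in\mathbb N$, $\nu>0$) is the set of g.i.e.m. $f$ such that (i) each $f|_{I_\alpha}$ extends to $\overline{I_\alpha}$ as an orientation-preserving $C^{2+\nu}$ diffeomorphism onto its image; (ii) $f$ has $k$-bounded combinatorics; (iii) $f$ has genus one and no connection. Symbolic coding: let $\tilde{\mathcal P}^n=\{f^i(I^n_\alpha):\alpha\in\mathcal A,\,1\le i\le q^n_\alpha\}$ and $\Lambda=[0,1]\setminus\bigcup_n\bigcup_{J\in\tilde{\mathcal P}^n}\partial J$. Letters: $\mathcal L=\mathcal A\times\{0,1\}\times\mathbb N$, with projections $\pi_1(\alpha,\chi,n)=\alpha$, $\pi_2(\alpha,\chi,n)=\chi$, $\pi_3(\alpha,\chi,n)=n$; $a_i$ always denotes a letter with $\pi_3(a_i)=i$. For $x\in\Lambda$ define $s(x)=(s_i(x))_{i\ge0}$: $s_0(x)=(\beta,0,0)$ where $x\in f(I^0_\beta)$; for $i\ge1$ let $k_{i-1}(x)=\min\{k\ge0:f^k(x)\in I^{i-1}\}$; if $f^{k_{i-1}(x)}(x)\in I^i$ then it lies in $f_i(I^i_\beta)$ for a unique $\beta$ and $s_i(x)=(\beta,0,i)$; otherwise $f_{i-1}(f^{k_{i-1}(x)}(x))\in f_i(I^i_\beta)$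 for a unique $\beta$ and $s_i(x)=(\beta,1,i)$. A word is a finite collection of letters $a_{n_1},\dots,a_{n_p}$ with distinct indices (the order in which it is written is immaterial); its cylinder is $[a_{n_1}\dots a_{n_p}]=\overline{\{x\in\Lambda:s_{n_j}(x)=a_{n_j},\,1\le j\le p\}}$, and the word is admissible if its cylinder is nonempty. *)

theory Defs
  imports "HOL-Analysis.Analysis"
begin

text \<open>A g.i.e.m. is given by a map f :: real => real (only its values on the
domain matter) together with a partition P :: 'a => real set of the domain,
indexed by the finite alphabet 'a.\<close>

definition gdom :: "('a \<Rightarrow> real set) \<Rightarrow> real set" where
  "gdom P = (\<Union>\<alpha>. P \<alpha>)"

definition ilt :: "real set \<Rightarrow> real set \<Rightarrow> bool" where
  "ilt J U \<longleftrightarrow> interior J \<inter> interior U = {} \<and> (\<forall>x\<in>J. \<forall>y\<in>U. x < y)"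

definition pi0 :: "('a::finite \<Rightarrow> real set) \<Rightarrow> 'a \<Rightarrow> nat" where
  "pi0 P \<alpha> = card {\<beta>. ilt (P \<beta>) (P \<alpha>)} + 1"

definition pi1 :: "(real \<Rightarrow> real) \<Rightarrow> ('a::finite \<Rightarrow> real set) \<Rightarrow> 'a \<Rightarrow> nat" where
  "pi1 f P \<alpha> = card {\<beta>. ilt (f ` P \<beta>) (f ` P \<alpha>)} + 1"

definition irreducible :: "(real \<Rightarrow> real) \<Rightarrow> ('a::finite \<Rightarrow> real set) \<Rightarrow> bool" where
  "irreducible f P \<longleftrightarrow>
     (\<forall>j. 1 \<le> j \<and> j < CARD('a) \<longrightarrow> pi1 f P ` {\<alpha>. pi0 P \<alpha> \<in> {1..j}} \<noteq> {1..j})"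

definition giem :: "(real \<Rightarrow> real) \<Rightarrow> ('a::finite \<Rightarrow> real set) \<Rightarrow> bool" where
  "giem f P \<longleftrightarrow>
     CARD('a) \<ge> 2 \<and>
     (\<exists>a b. a < b \<and> gdom P = {a..<b}) \<and>
     (\<forall>\<alpha>. \<exists>c d. c < d \<and> P \<alpha> = {c..<d}) \<and>
     (\<forall>\<alpha> \<beta>. \<alpha> \<noteq> \<beta> \<longrightarrow> P \<alpha> \<inter> P \<beta> = {}) \<and>
     bij_betw f (gdom P) (gdom P) \<and>
     (\<forall>\<alpha>. continuous_on (P \<alpha>) f \<and> strict_mono_on (P \<alpha>) f \<and> is_interval (f ` P \<alpha>)) \<and>
     bij_betw (pi0 P) UNIV {1..CARD('a)} \<and>
     bij_betw (pi1 f P) UNIV {1..CARD('a)} \<and>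
     irreducible f P"

definition ilen :: "real set \<Rightarrow> real" where
  "ilen S = Sup S - Inf S"

definition alpha0 :: "('a::finite \<Rightarrow> real set) \<Rightarrow> 'a" where
  "alpha0 P = (THE \<alpha>. pi0 P \<alpha> = CARD('a))"

definition alpha1 :: "(real \<Rightarrow> real) \<Rightarrow> ('a::finite \<Rightarrow> real set) \<Rightarrow> 'a" where
  "alpha1 f P = (THE \<alpha>. pi1 f P \<alpha> = CARD('a))"

definition type0 :: "(real \<Rightarrow> real) \<Rightarrow> ('a::finite \<Rightarrow> real set) \<Rightarrow> bool" where
  "type0 f P \<longleftrightarrow> ilen (P (alpha0 P)) > ilen (f ` P (alpha1 f P))"

definition R_defined :: "(real \<Rightarrow> real) \<Rightarrow> ('a::finite \<Rightarrow> real set) \<Rightarrow> bool" where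
  "R_defined f P \<longleftrightarrow> ilen (P (alpha0 P)) \<noteq> ilen (f ` P (alpha1 f P))"

definition winner :: "(real \<Rightarrow> real) \<Rightarrow> ('a::finite \<Rightarrow> real set) \<Rightarrow> 'a" where
  "winner f P = (if type0 f P then alpha0 P else alpha1 f P)"

definition loser :: "(real \<Rightarrow> real) \<Rightarrow> ('a::finite \<Rightarrow> real set) \<Rightarrow> 'a" where
  "loser f P = (if type0 f P then alpha1 f P else alpha0 P)"

definition ret :: "real set \<Rightarrow> (real \<Rightarrow> real) \<Rightarrow> real \<Rightarrow> nat" where
  "ret S g x = (LEAST k. 0 < k \<and> (g ^^ k) x \<in> S)"

definition first_return :: "real set \<Rightarrow> (real \<Rightarrow> real) \<Rightarrow> real \<Rightarrow> real" where
  "first_return S g x = (g ^^ ret S g x) x"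

definition Rpart :: "(real \<Rightarrow> real) \<Rightarrow> ('a::finite \<Rightarrow> real set) \<Rightarrow> 'a \<Rightarrow> real set" where
  "Rpart f P =
     (if type0 f P
      then P (alpha0 P := P (alpha0 P) - f ` P (alpha1 f P))
      else P (alpha1 f P := {x \<in> P (alpha1 f P). f x \<notin> P (alpha0 P)},
              alpha0 P := {x \<in> P (alpha1 f P). f x \<in> P (alpha0 P)}))"

definition Rstep :: "(real \<Rightarrow> real) \<times> ('a::finite \<Rightarrow> real set) \<Rightarrow> (real \<Rightarrow> real) \<times> ('a \<Rightarrow> real set)" where
  "Rstep fp = (let f = fst fp; P = snd fp; P1 = Rpart f P in (first_return (gdom P1) f, P1))"

definition fn :: "(real \<Rightarrow> real) \<Rightarrow> ('a::finite \<Rightarrow> real set) \<Rightarrow> nat \<Rightarrow> real \<Rightarrow> real" where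
  "fn f P n = fst ((Rstep ^^ n) (f, P))"

definition Pn :: "(real \<Rightarrow> real) \<Rightarrow> ('a::finite \<Rightarrow> real set) \<Rightarrow> nat \<Rightarrow> 'a \<Rightarrow> real set" where
  "Pn f P n = snd ((Rstep ^^ n) (f, P))"

definition In :: "(real \<Rightarrow> real) \<Rightarrow> ('a::finite \<Rightarrow> real set) \<Rightarrow> nat \<Rightarrow> real set" where
  "In f P n = gdom (Pn f P n)"

definition inf_renorm :: "(real \<Rightarrow> real) \<Rightarrow> ('a::finite \<Rightarrow> real set) \<Rightarrow> bool" where
  "inf_renorm f P \<longleftrightarrow> (\<forall>n. giem (fn f P n) (Pn f P n) \<and> R_defined (fn f P n) (Pn f P n))"

definition win_n :: "(real \<Rightarrow> real) \<Rightarrow> ('a::finite \<Rightarrow> real set) \<Rightarrow> nat \<Rightarrow> 'a" where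
  "win_n f P n = winner (fn f P n) (Pn f P n)"

definition los_n :: "(real \<Rightarrow> real) \<Rightarrow> ('a::finite \<Rightarrow> real set) \<Rightarrow> nat \<Rightarrow> 'a" where
  "los_n f P n = loser (fn f P n) (Pn f P n)"

definition bounded_comb :: "nat \<Rightarrow> (real \<Rightarrow> real) \<Rightarrow> ('a::finite \<Rightarrow> real set) \<Rightarrow> bool" where
  "bounded_comb k f P \<longleftrightarrow> inf_renorm f P \<and>
     (\<forall>n \<beta> \<gamma>. \<exists>n1 p. \<bar>int n - int n1\<bar> < int k \<and> \<bar>int n - int n1 - int p\<bar> < int k \<and>
        win_n f P n1 = \<beta> \<and> los_n f P (n1 + p) = \<gamma> \<and>
        (\<forall>i<p. los_n f P (n1 + i) = win_n f P (n1 + i + 1)))"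

text \<open>Left endpoint: the boundary of [a,b) is {a}.\<close>
definition no_connection :: "(real \<Rightarrow> real) \<Rightarrow> ('a::finite \<Rightarrow> real set) \<Rightarrow> bool" where
  "no_connection f P \<longleftrightarrow>
     (\<forall>m \<alpha> \<beta>. m \<ge> 1 \<and> pi0 P \<beta> \<noteq> 1 \<longrightarrow> (f ^^ m) (Inf (P \<alpha>)) \<noteq> Inf (P \<beta>))"

definition genus_one :: "(real \<Rightarrow> real) \<Rightarrow> ('a::finite \<Rightarrow> real set) \<Rightarrow> bool" where
  "genus_one f P \<longleftrightarrow>
     (let D = {x \<in> gdom P. \<not> continuous (at x within gdom P) f} in finite D \<and> card D \<le> 2)"

definition C2nu_diffeo :: "real \<Rightarrow> (real \<Rightarrow> real) \<Rightarrow> real set \<Rightarrow> bool" where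
  "C2nu_diffeo \<nu> g S \<longleftrightarrow>
     (\<exists>g1 g2 C. (\<forall>x\<in>S. (g has_real_derivative g1 x) (at x within S) \<and>
                          (g1 has_real_derivative g2 x) (at x within S) \<and> g1 x > 0) \<and>
               (\<forall>x\<in>S. \<forall>y\<in>S. \<bar>g2 x - g2 y\<bar> \<le> C * \<bar>x - y\<bar> powr \<nu>))"

definition in_B :: "nat \<Rightarrow> real \<Rightarrow> (real \<Rightarrow> real) \<Rightarrow> ('a::finite \<Rightarrow> real set) \<Rightarrow> bool" where
  "in_B k \<nu> f P \<longleftrightarrow> giem f P \<and>
     (\<forall>\<alpha>. \<exists>g. (\<forall>x\<in>P \<alpha>. g x = f x) \<and> C2nu_diffeo \<nu> g (closure (P \<alpha>))) \<and>
     bounded_comb k f P \<and> genus_one f P \<and> no_connection f P"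

definition qn :: "(real \<Rightarrow> real) \<Rightarrow> ('a::finite \<Rightarrow> real set) \<Rightarrow> nat \<Rightarrow> 'a \<Rightarrow> nat" where
  "qn f P n \<alpha> = ret (In f P n) f (Inf (Pn f P n \<alpha>))"

definition tildeP :: "(real \<Rightarrow> real) \<Rightarrow> ('a::finite \<Rightarrow> real set) \<Rightarrow> nat \<Rightarrow> real set set" where
  "tildeP f P n = {(f ^^ i) ` Pn f P n \<alpha> | \<alpha> i. 1 \<le> i \<and> i \<le> qn f P n \<alpha>}"

definition Lambda :: "(real \<Rightarrow> real) \<Rightarrow> ('a::finite \<Rightarrow> real set) \<Rightarrow> real set" where
  "Lambda f P = {0..<1} - (\<Union>n. \<Union>J\<in>tildeP f P n. {Inf J})"

text \<open>Letters (alpha, chi, n), chi in {0,1}.\<close>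
type_synonym 'a letter = "'a \<times> nat \<times> nat"

definition lidx :: "'a letter \<Rightarrow> nat" where
  "lidx l = snd (snd l)"

definition lsym :: "'a letter \<Rightarrow> 'a" where
  "lsym l = fst l"

fun scode :: "(real \<Rightarrow> real) \<Rightarrow> ('a::finite \<Rightarrow> real set) \<Rightarrow> nat \<Rightarrow> real \<Rightarrow> 'a letter" where
  "scode f P 0 x = (THE \<beta>. x \<in> f ` P \<beta>, 0, 0)"
| "scode f P (Suc j) x =
     (let k = (LEAST k. (f ^^ k) x \<in> In f P j); y = (f ^^ k) x in
      if y \<in> In f P (Suc j)
      then (THE \<beta>. y \<in> fn f P (Suc j) ` Pn f P (Suc j) \<beta>, 0, Suc j)
      else (THE \<beta>. fn f P j y \<in> fn f P (Suc j) ` Pn f P (Suc j) \<beta>, 1, Suc j))"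

definition is_word :: "'a letter set \<Rightarrow> bool" where
  "is_word W \<longleftrightarrow> finite W \<and> inj_on lidx W"

definition cylinder :: "(real \<Rightarrow> real) \<Rightarrow> ('a::finite \<Rightarrow> real set) \<Rightarrow> 'a letter set \<Rightarrow> real set" where
  "cylinder f P W = closure {x \<in> Lambda f P. \<forall>l\<in>W. scode f P (lidx l) x = l}"

definition admissible :: "(real \<Rightarrow> real) \<Rightarrow> ('a::finite \<Rightarrow> real set) \<Rightarrow> 'a letter set \<Rightarrow> bool" where
  "admissible f P W \<longleftrightarrow> is_word W \<and> cylinder f P W \<noteq> {}"

end

theory Submission
  imports Defs
begin

(* Write entry n x for the first point of the forward f-orbit of x lying in
   I^n, the domain of the n-th renormalization f_n.  The letter s_n(x) names the cell
   f_n(I^n_beta) containing entry n x, and entry (n+1) x is either entry n x or its image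
   under f_n, according to whether that point survives the (n+1)-st Rauzy-Veech step.
   Two facts about this coding give the lemma:
   (a) every point z of the cell f_n(I^n_beta) containing entry n x is entry n u for some u
       whose letters s_0..s_n agree with those of x (cells of f_(j+1) refine cells of f_j,
       and a cell reached through the removed part of I^j lies inside its image);
   (b) the letters s_i(u), i > n, depend on u only through entry n u.
   Given x coding a_k'..a_n and x' coding a'_n..a'_(n+m) with the same symbol at time n,
   every point of the cell of f_(n+m) named by x' is, by (a) applied twice and (b),
   entry (n+m) u for some u carrying all prescribed letters.  That cell is uncountable,
   while only countably many points are excluded from Lambda, so some such u lies in
   Lambda.  Only infinite renormalizability of f on [0,1) is used.
   The file collects elementary facts on a g.i.e.m. and its extreme letters, analyses one
   Rauzy-Veech step, develops first entries of orbits, then the renormalization sequence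
   and the coding, and finally derives the lemma. *)

lemma piece_sub_gdom: "P \<alpha> \<subseteq> gdom P"
  by (auto simp: gdom_def)

context
  fixes g :: "real \<Rightarrow> real" and P :: "'a::finite \<Rightarrow> real set"
  assumes G: "giem g P"
begin

lemma giem_piece: "\<exists>c d. c < d \<and> P \<alpha> = {c..<d}"
  using G by (simp add: giem_def)

lemma giem_pieces_disjoint: "\<alpha> \<noteq> \<beta> \<Longrightarrow> P \<alpha> \<inter> P \<beta> = {}"
  using G by (simp add: giem_def)

lemma giem_piece_nonempty: "P \<alpha> \<noteq> {}"
  using giem_piece[of \<alpha>] by auto

lemma giem_image_dom: "g ` gdom P = gdom P"
  using G by (simp add: giem_def bij_betw_def)

lemma giem_inj: "inj_on g (gdom P)"
  using G by (simp add: giem_def bij_betw_def)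

lemma giem_maps_dom: "x \<in> gdom P \<Longrightarrow> g x \<in> gdom P"
  using giem_image_dom by blast

lemma cell_sub_gdom: "g ` P \<alpha> \<subseteq> gdom P"
  using giem_image_dom piece_sub_gdom[of P \<alpha>] by blast

lemma cells_disjoint: "\<alpha> \<noteq> \<beta> \<Longrightarrow> g ` P \<alpha> \<inter> g ` P \<beta> = {}"
  using giem_inj giem_pieces_disjoint piece_sub_gdom[of P]
  unfolding inj_on_def by blast

lemma cells_cover: "x \<in> gdom P \<Longrightarrow> \<exists>\<alpha>. x \<in> g ` P \<alpha>"
  using giem_image_dom unfolding gdom_def by (metis UN_iff image_UN)

lemma the_cell: "x \<in> g ` P \<alpha> \<Longrightarrow> (THE \<beta>. x \<in> g ` P \<beta>) = \<alpha>"
  using cells_disjoint by blast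

lemma cell_uncountable: "uncountable (g ` P \<alpha>)"
proof -
  obtain c d where cd: "c < d" "P \<alpha> = {c..<d}" using giem_piece by blast
  define m where "m = (c + d) / 2"
  have m: "c \<in> P \<alpha>" "m \<in> P \<alpha>" "c < m" using cd unfolding m_def by auto
  have "g c < g m"
    using G m unfolding giem_def strict_mono_on_def by blast
  moreover have "{g c..g m} \<subseteq> g ` P \<alpha>"
    using G m unfolding giem_def is_interval_1 by (auto simp: image_iff)
  ultimately show ?thesis
    using uncountable_closed_interval countable_subset by blast
qed

end

lemma bij_top_value:
  assumes "bij_betw (h::'a::finite \<Rightarrow> nat) UNIV {1..CARD('a)}"
  shows "h (THE \<alpha>. h \<alpha> = CARD('a)) = CARD('a)"
proof -
  have "CARD('a) \<in> h ` UNIV"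
    using assms finite_UNIV_card_ge_0[where 'a='a] by (simp add: bij_betw_def)
  then have "\<exists>!\<alpha>. h \<alpha> = CARD('a)"
    using assms by (metis bij_betw_def inj_onD UNIV_I imageE)
  then show ?thesis by (rule theI')
qed

lemma bij_image_without_top:
  assumes "bij_betw h UNIV {1..d::nat}" "h a = d"
  shows "h ` (UNIV - {a}) = {1..d-1}"
proof -
  have "h ` (UNIV - {a}) = h ` UNIV - {h a}"
    using assms(1) by (simp add: bij_betw_def image_set_diff)
  also have "\<dots> = {1..d} - {d}" using assms by (simp add: bij_betw_def)
  finally show ?thesis by auto
qed

lemma bij_preimage_below_top:
  assumes "bij_betw h UNIV {1..d::nat}" "h a = d"
  shows "{\<alpha>. h \<alpha> \<in> {1..d-1}} = UNIV - {a}"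
proof (intro set_eqI iffI)
  fix \<alpha> assume "\<alpha> \<in> UNIV - {a}"
  then have "h \<alpha> \<in> h ` (UNIV - {a})" by blast
  then show "\<alpha> \<in> {\<alpha>. h \<alpha> \<in> {1..d-1}}" using bij_image_without_top[OF assms] by simp
qed (use assms(2) in auto)

lemma ilt_all_of_card:
  fixes Q :: "'a::finite \<Rightarrow> real set"
  assumes ne: "\<And>\<beta>. Q \<beta> \<noteq> {}"
    and c: "card {\<beta>. ilt (Q \<beta>) (Q \<alpha>)} + 1 = CARD('a)"
    and b: "\<beta> \<noteq> \<alpha>"
  shows "ilt (Q \<beta>) (Q \<alpha>)"
proof -
  let ?S = "{\<beta>. ilt (Q \<beta>) (Q \<alpha>)}"
  have "\<not> ilt (Q \<alpha>) (Q \<alpha>)" using ne[of \<alpha>] unfolding ilt_def by fastforce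
  then have sub: "?S \<subseteq> UNIV - {\<alpha>}" by blast
  have "card ?S = card (UNIV - {\<alpha>})" using c by (simp add: card_Diff_singleton)
  then have "?S = UNIV - {\<alpha>}" using card_subset_eq[OF _ sub] by simp
  then show ?thesis using b by blast
qed

context
  fixes g :: "real \<Rightarrow> real" and P :: "'a::finite \<Rightarrow> real set"
  assumes G: "giem g P"
begin

lemma alpha0_rightmost: "\<beta> \<noteq> alpha0 P \<Longrightarrow> ilt (P \<beta>) (P (alpha0 P))"
proof (rule ilt_all_of_card)
  show "card {\<gamma>. ilt (P \<gamma>) (P (alpha0 P))} + 1 = CARD('a)"
    using bij_top_value[of "pi0 P"] G unfolding giem_def alpha0_def pi0_def by simp
qed (use giem_piece_nonempty[OF G] in auto)

lemma alpha1_rightmost: "\<beta> \<noteq> alpha1 g P \<Longrightarrow> ilt (g ` P \<beta>) (g ` P (alpha1 g P))"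
proof (rule ilt_all_of_card[where Q = "\<lambda>\<gamma>. g ` P \<gamma>"])
  show "card {\<gamma>. ilt (g ` P \<gamma>) (g ` P (alpha1 g P))} + 1 = CARD('a)"
    using bij_top_value[of "pi1 g P"] G unfolding giem_def alpha1_def pi1_def by simp
qed (use giem_piece_nonempty[OF G] in auto)

text \<open>Irreducibility (with j = d - 1) forces the two extreme letters to differ: otherwise
  the letters other than alpha(0) = alpha(1) occupy positions 1..d-1 for both pi0 and pi1.\<close>
lemma alpha0_neq_alpha1: "alpha0 P \<noteq> alpha1 g P"
proof
  assume e: "alpha0 P = alpha1 g P"
  define d where "d = CARD('a)"
  have d2: "d \<ge> 2" using G by (simp add: giem_def d_def)
  have b0: "bij_betw (pi0 P) UNIV {1..d}" and b1: "bij_betw (pi1 g P) UNIV {1..d}"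
    using G by (auto simp: giem_def d_def)
  have t0: "pi0 P (alpha0 P) = d" and t1: "pi1 g P (alpha0 P) = d"
    using bij_top_value[of "pi0 P"] bij_top_value[of "pi1 g P"] b0 b1 e
    by (auto simp: d_def alpha0_def alpha1_def)
  have "pi1 g P ` {\<alpha>. pi0 P \<alpha> \<in> {1..d-1}} = {1..d-1}"
    using bij_preimage_below_top[OF b0 t0] bij_image_without_top[OF b1 t1] by simp
  moreover have "irreducible g P" using G by (simp add: giem_def)
  ultimately show False using d2 unfolding irreducible_def d_def by auto
qed

end

section \<open>Geometry of one Rauzy--Veech step\<close>

text \<open>Write I(alpha(0)) = [c, d).  The domain lies below d, the rightmost cell is an upward
  closed part of the domain, and so both end at d; their lengths then decide which one
  contains the other.\<close>

context
  fixes g :: "real \<Rightarrow> real" and P :: "'a::finite \<Rightarrow> real set" and c d :: real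
  assumes G: "giem g P" and top_piece: "P (alpha0 P) = {c..<d}"
begin

lemma left_of_alpha0: "x \<in> P \<beta> \<Longrightarrow> \<beta> \<noteq> alpha0 P \<Longrightarrow> x < c"
  using alpha0_rightmost[OF G] top_piece giem_piece_nonempty[OF G, of "alpha0 P"]
  unfolding ilt_def by fastforce

lemma dom_below_top: "x \<in> gdom P \<Longrightarrow> x < d"
proof -
  assume "x \<in> gdom P"
  then obtain \<beta> where x: "x \<in> P \<beta>" unfolding gdom_def by blast
  have "c < d" using top_piece giem_piece_nonempty[OF G, of "alpha0 P"] by auto
  then show "x < d" using x left_of_alpha0[OF x] top_piece by (cases "\<beta> = alpha0 P") auto
qed

lemma alpha1_cell_upward_closed:
  assumes "y \<in> g ` P (alpha1 g P)" "y \<le> y'" "y' \<in> gdom P"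
  shows "y' \<in> g ` P (alpha1 g P)"
proof (rule ccontr)
  assume out: "y' \<notin> g ` P (alpha1 g P)"
  obtain \<beta> where "y' \<in> g ` P \<beta>" using cells_cover[OF G] assms(3) by blast
  moreover have "\<beta> \<noteq> alpha1 g P" using out calculation by blast
  ultimately have "y' < y" using alpha1_rightmost[OF G] assms(1) unfolding ilt_def by blast
  then show False using assms(2) by simp
qed

lemma alpha1_cell_bounds:
  "Sup (g ` P (alpha1 g P)) = d" "bdd_below (g ` P (alpha1 g P))"
proof -
  let ?B = "g ` P (alpha1 g P)"
  have BI: "?B \<subseteq> gdom P" by (rule cell_sub_gdom[OF G])
  obtain y0 where y0: "y0 \<in> ?B" using giem_piece_nonempty[OF G] by blast
  have cd: "c < d" using top_piece giem_piece_nonempty[OF G, of "alpha0 P"] by auto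
  have AI: "{c..<d} \<subseteq> gdom P" using top_piece piece_sub_gdom[of P "alpha0 P"] by simp
  have bdd: "bdd_above ?B" using dom_below_top BI by (meson bdd_above.I subsetD less_imp_le)
  show "Sup ?B = d"
  proof (rule antisym)
    show "Sup ?B \<le> d" using y0 BI dom_below_top by (intro cSup_least) (auto intro: less_imp_le)
    have "max y0 c < d" using cd dom_below_top y0 BI by auto
    then show "d \<le> Sup ?B"
    proof (rule dense_le_bounded)
      fix w assume w: "max y0 c < w" "w < d"
      then have "w \<in> gdom P" using AI by auto
      then have "w \<in> ?B" using alpha1_cell_upward_closed[OF y0, of w] w by simp
      then show "w \<le> Sup ?B" using bdd by (rule cSup_upper)
    qed
  qed
  obtain a b where "gdom P = {a..<b}" using G by (auto simp: giem_def)
  then show "bdd_below ?B" using BI by (metis atLeastLessThan_iff bdd_below.I subsetD)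
qed

lemma type0_cell_in_piece: "type0 g P \<Longrightarrow> g ` P (alpha1 g P) \<subseteq> P (alpha0 P)"
proof
  fix y assume t: "type0 g P" and y: "y \<in> g ` P (alpha1 g P)"
  have "ilen (P (alpha0 P)) = d - c" using top_piece giem_piece_nonempty[OF G, of "alpha0 P"]
    by (simp add: ilen_def)
  then have "Inf (g ` P (alpha1 g P)) > c"
    using t alpha1_cell_bounds(1) by (simp add: type0_def ilen_def)
  moreover have "Inf (g ` P (alpha1 g P)) \<le> y" using y alpha1_cell_bounds(2) by (rule cInf_lower)
  moreover have "y < d" using y cell_sub_gdom[OF G] dom_below_top by blast
  ultimately show "y \<in> P (alpha0 P)" using top_piece by simp
qed

lemma type1_piece_in_cell:
  assumes "R_defined g P" "\<not> type0 g P"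
  shows "P (alpha0 P) \<subseteq> g ` P (alpha1 g P)"
proof
  fix x assume x: "x \<in> P (alpha0 P)"
  let ?B = "g ` P (alpha1 g P)"
  have "ilen (P (alpha0 P)) = d - c" using top_piece giem_piece_nonempty[OF G, of "alpha0 P"]
    by (simp add: ilen_def)
  then have "Inf ?B < c"
    using assms alpha1_cell_bounds(1) by (auto simp: type0_def R_defined_def ilen_def)
  then have "Inf ?B < x" using x top_piece by simp
  then obtain y where "y \<in> ?B" "y < x"
    using cInf_less_iff[of ?B x] alpha1_cell_bounds(2) giem_piece_nonempty[OF G] by blast
  then show "x \<in> ?B"
    using alpha1_cell_upward_closed x piece_sub_gdom[of P "alpha0 P"] by fastforce
qed

end

definition removed :: "(real \<Rightarrow> real) \<Rightarrow> ('a::finite \<Rightarrow> real set) \<Rightarrow> real set" where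
  "removed g P = (if type0 g P then g ` P (alpha1 g P) else P (alpha0 P))"

lemma gdom_shrink_piece:
  assumes "\<And>\<beta>. \<beta> \<noteq> \<alpha> \<Longrightarrow> P \<beta> \<inter> P \<alpha> = {}" "B \<subseteq> P \<alpha>"
  shows "gdom (P(\<alpha> := P \<alpha> - B)) = gdom P - B"
proof (intro set_eqI iffI)
  fix x assume "x \<in> gdom (P(\<alpha> := P \<alpha> - B))"
  then obtain \<gamma> where "x \<in> (P(\<alpha> := P \<alpha> - B)) \<gamma>" unfolding gdom_def by blast
  then show "x \<in> gdom P - B" using assms unfolding gdom_def by (cases "\<gamma> = \<alpha>") auto
next
  fix x assume "x \<in> gdom P - B"
  then obtain \<gamma> where "x \<in> P \<gamma>" "x \<notin> B" unfolding gdom_def by blast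
  then have "x \<in> (P(\<alpha> := P \<alpha> - B)) \<gamma>" by auto
  then show "x \<in> gdom (P(\<alpha> := P \<alpha> - B))" unfolding gdom_def by blast
qed

lemma gdom_split_piece:
  assumes "\<And>\<gamma>. \<gamma> \<noteq> \<alpha> \<Longrightarrow> P \<gamma> \<inter> P \<alpha> = {}" "\<alpha> \<noteq> \<beta>" "X \<union> Y = P \<beta>"
  shows "gdom (P(\<beta> := X, \<alpha> := Y)) = gdom P - P \<alpha>"
proof (intro set_eqI iffI)
  fix x assume "x \<in> gdom (P(\<beta> := X, \<alpha> := Y))"
  then obtain \<gamma> where x: "x \<in> (P(\<beta> := X, \<alpha> := Y)) \<gamma>" unfolding gdom_def by blast
  have disj: "P \<beta> \<inter> P \<alpha> = {}" using assms(1)[of \<beta>] assms(2) by simp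
  have "x \<in> P \<beta> \<or> (x \<in> P \<gamma> \<and> \<gamma> \<noteq> \<alpha>)"
    using x assms(2,3) by (cases "\<gamma> = \<alpha>"; cases "\<gamma> = \<beta>") auto
  then show "x \<in> gdom P - P \<alpha>" using disj assms(1) unfolding gdom_def by blast
next
  fix x assume "x \<in> gdom P - P \<alpha>"
  then obtain \<gamma> where x: "x \<in> P \<gamma>" "\<gamma> \<noteq> \<alpha>" unfolding gdom_def by blast
  then have "x \<in> (P(\<beta> := X, \<alpha> := Y)) \<gamma> \<or> x \<in> (P(\<beta> := X, \<alpha> := Y)) \<alpha>"
    using assms(2,3) by (cases "\<gamma> = \<beta>") auto
  then show "x \<in> gdom (P(\<beta> := X, \<alpha> := Y))" unfolding gdom_def by blast
qed

context
  fixes g :: "real \<Rightarrow> real" and P :: "'a::finite \<Rightarrow> real set"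
  assumes G: "giem g P" and RD: "R_defined g P"
begin

lemma removed_sub_alpha0: "removed g P \<subseteq> P (alpha0 P)"
  using giem_piece[OF G, of "alpha0 P"] type0_cell_in_piece[OF G]
  by (auto simp: removed_def)

lemma removed_sub_alpha1_cell: "removed g P \<subseteq> g ` P (alpha1 g P)"
proof -
  obtain c d where "P (alpha0 P) = {c..<d}" using giem_piece[OF G] by blast
  then show ?thesis using type1_piece_in_cell[OF G _ RD] by (auto simp: removed_def)
qed

lemma removed_sub_dom: "removed g P \<subseteq> gdom P"
  using removed_sub_alpha0 piece_sub_gdom[of P "alpha0 P"] by blast

lemma Rpart_dom: "gdom (Rpart g P) = gdom P - removed g P"
proof -
  have disj: "\<And>\<beta>. \<beta> \<noteq> alpha0 P \<Longrightarrow> P \<beta> \<inter> P (alpha0 P) = {}"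
    using giem_pieces_disjoint[OF G] by blast
  show ?thesis
  proof (cases "type0 g P")
  case True
  then show ?thesis
      using gdom_shrink_piece[where P = P, OF disj removed_sub_alpha0]
      by (simp add: Rpart_def removed_def)
  next
    case False
    let ?X = "{x \<in> P (alpha1 g P). g x \<notin> P (alpha0 P)}"
      and ?Y = "{x \<in> P (alpha1 g P). g x \<in> P (alpha0 P)}"
    have "?X \<union> ?Y = P (alpha1 g P)" by blast
    then have "gdom (Rpart g P) = gdom P - P (alpha0 P)"
      using False gdom_split_piece[where P = P, OF disj alpha0_neq_alpha1[OF G]]
      by (simp add: Rpart_def)
    then show ?thesis using False by (simp add: removed_def)
  qed
qed

text \<open>A removed point is mapped into I^1, since it lies in I(alpha(0)) and g(I(alpha(0)))
  is disjoint from the rightmost cell g(I(alpha(1))).\<close>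
lemma removed_exit: "y \<in> removed g P \<Longrightarrow> g y \<in> gdom P - removed g P"
proof -
  assume y: "y \<in> removed g P"
  then have "g y \<in> g ` P (alpha0 P)" using removed_sub_alpha0 by blast
  then have "g y \<notin> g ` P (alpha1 g P)"
    using cells_disjoint[OF G alpha0_neq_alpha1[OF G]] by blast
  then show ?thesis
    using y removed_sub_alpha1_cell removed_sub_dom giem_maps_dom[OF G] by blast
qed

lemma Rpart_piece_cases:
  assumes p: "p \<in> Rpart g P \<beta>"
  shows "\<beta> \<noteq> loser g P \<Longrightarrow> p \<in> P \<beta> \<and> g p \<notin> removed g P"
    and "\<beta> = loser g P \<Longrightarrow> g p \<in> removed g P"
proof -
  have ne: "alpha0 P \<noteq> alpha1 g P" using alpha0_neq_alpha1[OF G] .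
  have other_cell: "\<And>\<gamma> x. \<gamma> \<noteq> alpha1 g P \<Longrightarrow> x \<in> P \<gamma> \<Longrightarrow> g x \<notin> g ` P (alpha1 g P)"
    using cells_disjoint[OF G] by blast
  show "p \<in> P \<beta> \<and> g p \<notin> removed g P" if b: "\<beta> \<noteq> loser g P"
  proof (cases "type0 g P")
    case True
    then show ?thesis
      using p b other_cell by (auto simp: Rpart_def removed_def loser_def split: if_splits)
  next
    case False
    have "P (alpha0 P) \<subseteq> g ` P (alpha1 g P)"
      using removed_sub_alpha1_cell False by (simp add: removed_def)
    then have "p \<in> P \<beta>" "g p \<notin> P (alpha0 P)"
      using p b False other_cell by (auto simp: Rpart_def loser_def split: if_splits) blast
    then show ?thesis using False by (simp add: removed_def)
  qed
  show "g p \<in> removed g P" if "\<beta> = loser g P"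
    using p that ne by (auto simp: Rpart_def loser_def removed_def split: if_splits)
qed

lemma first_return_Rpart:
  assumes p: "p \<in> gdom P - removed g P"
  shows "first_return (gdom P - removed g P) g p =
           (if g p \<notin> removed g P then g p else g (g p))"
proof -
  let ?S = "gdom P - removed g P"
  have gp: "g p \<in> gdom P" using giem_maps_dom[OF G] p by blast
  show ?thesis
  proof (cases "g p \<in> removed g P")
    case False
    then have "ret ?S g p = 1" unfolding ret_def by (intro Least_equality) (use gp in auto)
    then show ?thesis using False by (simp add: first_return_def)
  next
    case True
    have "ret ?S g p = 2" unfolding ret_def
    proof (intro Least_equality)
      show "0 < (2::nat) \<and> (g ^^ 2) p \<in> ?S"
        using removed_exit[OF True] by (simp add: numeral_2_eq_2)
      show "2 \<le> k" if "0 < k \<and> (g ^^ k) p \<in> ?S" for k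
        using that True by (cases "k = 1") auto
    qed
    then show ?thesis using True by (simp add: first_return_def numeral_2_eq_2)
  qed
qed

lemma first_return_on_piece:
  assumes p: "p \<in> Rpart g P \<beta>"
  shows "first_return (gdom (Rpart g P)) g p = (if \<beta> = loser g P then g (g p) else g p)"
proof -
  have "p \<in> gdom P - removed g P" using p Rpart_dom unfolding gdom_def by blast
  then show ?thesis
    using first_return_Rpart Rpart_piece_cases[OF p] Rpart_dom by auto
qed

lemma new_cell_in_old_cell:
  "\<exists>\<gamma>. first_return (gdom (Rpart g P)) g ` Rpart g P \<beta> \<subseteq> g ` P \<gamma>"
proof (cases "\<beta> = loser g P")
  case True
  then have "first_return (gdom (Rpart g P)) g ` Rpart g P \<beta> \<subseteq> g ` P (alpha0 P)"
    using first_return_on_piece Rpart_piece_cases(2) removed_sub_alpha0 by fastforce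
  then show ?thesis by blast
next
  case False
  then have "first_return (gdom (Rpart g P)) g ` Rpart g P \<beta> \<subseteq> g ` P \<beta>"
    using first_return_on_piece Rpart_piece_cases(1) by fastforce
  then show ?thesis by blast
qed

text \<open>A cell of the renormalized map containing the image of a removed point is the
  loser's cell, hence consists of images of removed points.\<close>
lemma new_cell_through_removed:
  assumes y: "y \<in> removed g P"
    and gy: "g y \<in> first_return (gdom (Rpart g P)) g ` Rpart g P \<beta>"
  shows "first_return (gdom (Rpart g P)) g ` Rpart g P \<beta> \<subseteq> g ` removed g P"
proof -
  have \<beta>: "\<beta> = loser g P"
  proof (rule ccontr)
    assume nb: "\<beta> \<noteq> loser g P"
    obtain p where p: "p \<in> Rpart g P \<beta>" "g y = g p"
      using gy first_return_on_piece nb by auto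
    have "p \<in> gdom P - removed g P" using p(1) Rpart_dom unfolding gdom_def by blast
    moreover have "y = p"
      using giem_inj[OF G] p(2) y removed_sub_dom calculation unfolding inj_on_def by blast
    ultimately show False using y by blast
  qed
  show ?thesis
    using first_return_on_piece Rpart_piece_cases(2) \<beta> by fastforce
qed

end

section \<open>First entry of an orbit into a set\<close>

text \<open>The letters s_n(x) are read off at the first point of the forward orbit of x that
  lies in I^n.  We develop this notion for an arbitrary map h and set A.\<close>

definition reaches :: "('b \<Rightarrow> 'b) \<Rightarrow> 'b set \<Rightarrow> 'b \<Rightarrow> bool" where
  "reaches h A x \<longleftrightarrow> (\<exists>k. (h ^^ k) x \<in> A)"

definition hit :: "('b \<Rightarrow> 'b) \<Rightarrow> 'b set \<Rightarrow> 'b \<Rightarrow> 'b" where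
  "hit h A x = (h ^^ (LEAST k. (h ^^ k) x \<in> A)) x"

lemma reachesI: "(h ^^ k) x \<in> A \<Longrightarrow> reaches h A x"
  unfolding reaches_def by blast

lemma reaches_funpow: "reaches h A ((h ^^ k) x) \<Longrightarrow> reaches h A x"
  unfolding reaches_def by (metis funpow_add o_apply)

lemma hit_in: "reaches h A x \<Longrightarrow> hit h A x \<in> A"
  unfolding reaches_def hit_def by (rule LeastI_ex)

lemma hit_self: "x \<in> A \<Longrightarrow> hit h A x = x"
  unfolding hit_def by (metis (mono_tags) Least_eq_0 funpow_0)

lemma hit_on_orbit: "\<exists>k. hit h A x = (h ^^ k) x"
  unfolding hit_def by blast

lemma hit_shift:
  assumes r: "reaches h A x" and before: "\<And>i. i < k \<Longrightarrow> (h ^^ i) x \<notin> A"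
  shows "hit h A ((h ^^ k) x) = hit h A x"
proof -
  define L where "L = (LEAST i. (h ^^ i) x \<in> A)"
  have L: "(h ^^ L) x \<in> A" using r unfolding reaches_def L_def by (rule LeastI_ex)
  have kL: "k \<le> L" using before L by (meson not_le)
  have "(LEAST i. (h ^^ i) ((h ^^ k) x) \<in> A) = L - k"
  proof (rule Least_equality)
    show "(h ^^ (L - k)) ((h ^^ k) x) \<in> A"
      using L kL by (simp flip: funpow_add o_apply[of "h ^^ (L - k)"])
    show "L - k \<le> i" if "(h ^^ i) ((h ^^ k) x) \<in> A" for i
    proof -
      have "(h ^^ (i + k)) x \<in> A" using that by (simp add: funpow_add)
      then have "L \<le> i + k" unfolding L_def by (rule Least_le)
      then show ?thesis by simp
    qed
  qed
  then show ?thesis using kL unfolding hit_def L_def[symmetric]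
    by (simp flip: funpow_add o_apply[of "h ^^ (L - k)"])
qed

lemma hit_step: "reaches h A x \<Longrightarrow> x \<notin> A \<Longrightarrow> hit h A (h x) = hit h A x"
  using hit_shift[of h A x 1] by simp

lemma hit_nested:
  assumes "B \<subseteq> A" "reaches h B x"
  shows "hit h B (hit h A x) = hit h B x"
proof -
  have "reaches h A x" using assms unfolding reaches_def by blast
  then have "hit h A x = (h ^^ (LEAST k. (h ^^ k) x \<in> A)) x" by (simp add: hit_def)
  moreover have "(h ^^ i) x \<notin> B" if "i < (LEAST k. (h ^^ k) x \<in> A)" for i
    using not_less_Least[OF that] assms(1) by blast
  ultimately show ?thesis using hit_shift[OF assms(2)] by metis
qed

section \<open>The renormalization sequence of an infinitely renormalizable map on [0,1)\<close>

locale unit_renormalizable =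
  fixes f :: "real \<Rightarrow> real" and P :: "'a::finite \<Rightarrow> real set"
  assumes renorm: "inf_renorm f P" and unit_dom: "gdom P = {0..<1}"
begin

abbreviation "F j \<equiv> fn f P j"
abbreviation "Part j \<equiv> Pn f P j"
abbreviation "Dom j \<equiv> In f P j"
abbreviation "Rem j \<equiv> removed (F j) (Part j)"
abbreviation "entry j x \<equiv> hit f (Dom j) x"

lemma giem_n: "giem (F j) (Part j)"
  using renorm by (simp add: inf_renorm_def)

lemma R_defined_n: "R_defined (F j) (Part j)"
  using renorm by (simp add: inf_renorm_def)

lemma Part_Suc: "Part (Suc j) = Rpart (F j) (Part j)"
  by (simp add: Pn_def fn_def Rstep_def Let_def)

lemma F_Suc: "F (Suc j) = first_return (gdom (Part (Suc j))) (F j)"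
  by (simp add: Pn_def fn_def Rstep_def Let_def)

lemma renorm_0: "F 0 = f" "Part 0 = P" "Dom 0 = {0..<1}"
  by (simp_all add: fn_def Pn_def In_def unit_dom)

lemma Dom_Suc: "Dom (Suc j) = Dom j - Rem j"
  unfolding In_def Part_Suc by (rule Rpart_dom[OF giem_n R_defined_n])

lemma Dom_unit: "Dom j \<subseteq> {0..<1}"
  by (induction j) (use renorm_0 Dom_Suc in auto)

lemma f_maps_unit: "x \<in> {0..<1} \<Longrightarrow> f x \<in> {0..<1}"
  using giem_maps_dom[OF giem_n[of 0]] unfolding renorm_0(1,2) unit_dom by simp

lemma removed_exit_n: "y \<in> Rem j \<Longrightarrow> F j y \<in> Dom (Suc j)"
  using removed_exit[OF giem_n R_defined_n] Dom_Suc unfolding In_def by simp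

lemma F_Suc_eq:
  "p \<in> Dom (Suc j) \<Longrightarrow> F (Suc j) p = (if F j p \<notin> Rem j then F j p else F j (F j p))"
  using first_return_Rpart[OF giem_n R_defined_n] Dom_Suc
  unfolding F_Suc In_def Part_Suc by (simp add: Rpart_dom[OF giem_n R_defined_n])

lemma entry_Suc_of:
  assumes F_j: "\<And>y. y \<in> Dom j \<Longrightarrow> F j y = entry j (f y)" and r: "reaches f (Dom j) x"
  shows "reaches f (Dom (Suc j)) x"
    and "entry (Suc j) x = (if entry j x \<in> Dom (Suc j) then entry j x else F j (entry j x))"
proof -
  let ?z = "entry j x"
  have z: "?z \<in> Dom j" using r by (rule hit_in)
  obtain K where K: "?z = (f ^^ K) x" using hit_on_orbit[of f "Dom j" x] by blast
  have sub: "Dom (Suc j) \<subseteq> Dom j" using Dom_Suc by blast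
  have "reaches f (Dom (Suc j)) x \<and> entry (Suc j) x =
          (if ?z \<in> Dom (Suc j) then ?z else F j ?z)"
  proof (cases "?z \<in> Dom (Suc j)")
    case True
    then have rS: "reaches f (Dom (Suc j)) x" using K reachesI by metis
    then show ?thesis using True hit_nested[OF sub rS] hit_self[OF True] by simp
  next
    case False
    have Fz: "F j ?z \<in> Dom (Suc j)" using removed_exit_n False z Dom_Suc by blast
    obtain L where L: "F j ?z = (f ^^ L) (f ?z)" using F_j[OF z] hit_on_orbit by metis
    have rfz: "reaches f (Dom (Suc j)) (f ?z)" using Fz L reachesI by metis
    then have rz: "reaches f (Dom (Suc j)) ?z" using reaches_funpow[where k = 1] by simp
    then have rS: "reaches f (Dom (Suc j)) x" using K reaches_funpow by metis
    have "entry (Suc j) x = entry (Suc j) ?z" using hit_nested[OF sub rS] by simp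
    also have "\<dots> = entry (Suc j) (f ?z)" using hit_step[OF rz False] by simp
    also have "\<dots> = entry (Suc j) (entry j (f ?z))" using hit_nested[OF sub rfz] by simp
    also have "\<dots> = F j ?z" using F_j[OF z] hit_self[OF Fz] by simp
    finally show ?thesis using rS False by simp
  qed
  then show "reaches f (Dom (Suc j)) x"
    and "entry (Suc j) x = (if ?z \<in> Dom (Suc j) then ?z else F j ?z)" by auto
qed

lemma first_return_and_reach:
  "(\<forall>y\<in>Dom j. F j y = entry j (f y)) \<and> (\<forall>x\<in>{0..<1}. reaches f (Dom j) x)"
proof (induction j)
  case 0
  then show ?case
    using renorm_0 f_maps_unit by (auto intro!: hit_self[symmetric] reachesI[where k = 0])
next
  case (Suc j)
  have F_j: "\<And>y. y \<in> Dom j \<Longrightarrow> F j y = entry j (f y)"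
    and r: "\<And>x. x \<in> {0..<1} \<Longrightarrow> reaches f (Dom j) x" using Suc.IH by auto
  have "F (Suc j) y = entry (Suc j) (f y)" if y: "y \<in> Dom (Suc j)" for y
  proof -
    have yj: "y \<in> Dom j" using y Dom_Suc by blast
    have fy: "f y \<in> {0..<1}" using yj Dom_unit f_maps_unit by blast
    have "F j y \<in> Dom j" using giem_maps_dom[OF giem_n] yj unfolding In_def by blast
    then show ?thesis
      using F_Suc_eq[OF y] entry_Suc_of(2)[OF F_j r[OF fy]] F_j[OF yj] Dom_Suc by auto
  qed
  then show ?case using entry_Suc_of(1)[OF F_j r] by blast
qed

lemma reaches_Dom: "x \<in> {0..<1} \<Longrightarrow> reaches f (Dom j) x"
  using first_return_and_reach by blast

lemma entry_in_Dom: "x \<in> {0..<1} \<Longrightarrow> entry j x \<in> Dom j"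
  using reaches_Dom by (rule hit_in)

lemma entry_0: "x \<in> {0..<1} \<Longrightarrow> entry 0 x = x"
  using hit_self[of x "{0..<1}" f] renorm_0(3) by simp

lemma entry_Suc:
  "x \<in> {0..<1} \<Longrightarrow>
     entry (Suc j) x = (if entry j x \<in> Dom (Suc j) then entry j x else F j (entry j x))"
  using entry_Suc_of(2) first_return_and_reach reaches_Dom by blast

section \<open>The symbolic coding\<close>

lemma scode_Suc:
  "scode f P (Suc j) x = (if entry j x \<in> Dom (Suc j)
     then (THE \<beta>. entry j x \<in> F (Suc j) ` Part (Suc j) \<beta>, 0, Suc j)
     else (THE \<beta>. F j (entry j x) \<in> F (Suc j) ` Part (Suc j) \<beta>, 1, Suc j))"
  by (simp add: Let_def hit_def)

lemma cell_Suc_refines: "\<exists>\<gamma>. F (Suc j) ` Part (Suc j) \<beta> \<subseteq> F j ` Part j \<gamma>"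
  using new_cell_in_old_cell[OF giem_n R_defined_n] unfolding F_Suc Part_Suc .

lemma cell_Suc_through_removed:
  "y \<in> Rem j \<Longrightarrow> F j y \<in> F (Suc j) ` Part (Suc j) \<beta> \<Longrightarrow>
     F (Suc j) ` Part (Suc j) \<beta> \<subseteq> F j ` Rem j"
  using new_cell_through_removed[OF giem_n R_defined_n] unfolding F_Suc Part_Suc by blast

lemma entry_in_coded_cell:
  assumes x: "x \<in> {0..<1}"
  shows "entry n x \<in> F n ` Part n (fst (scode f P n x))"
proof (cases n)
  case 0
  obtain \<beta> where b: "x \<in> f ` P \<beta>" using cells_cover[OF giem_n[of 0]] x unfolding renorm_0(1,2) unit_dom by blast
  then show ?thesis
    using 0 the_cell[OF giem_n[of 0]] entry_0[OF x] renorm_0 by simp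
next
  case (Suc j)
  let ?y = "if entry j x \<in> Dom (Suc j) then entry j x else F j (entry j x)"
  have "?y \<in> Dom (Suc j)"
    using removed_exit_n entry_in_Dom[OF x] Dom_Suc by auto
  then obtain \<beta> where b: "?y \<in> F (Suc j) ` Part (Suc j) \<beta>"
    using cells_cover[OF giem_n] unfolding In_def by blast
  then have "fst (scode f P (Suc j) x) = \<beta>"
    using the_cell[OF giem_n] scode_Suc by (cases "entry j x \<in> Dom (Suc j)") auto
  then show ?thesis using b Suc entry_Suc[OF x] by simp
qed

lemma scode_Suc_cell:
  assumes x: "x \<in> {0..<1}" and c: "entry (Suc j) x \<in> F (Suc j) ` Part (Suc j) \<beta>"
  shows "scode f P (Suc j) x = (\<beta>, if entry j x \<in> Dom (Suc j) then 0 else 1, Suc j)"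
proof (cases "entry j x \<in> Dom (Suc j)")
  case True
  then show ?thesis using c the_cell[OF giem_n] scode_Suc entry_Suc[OF x] by simp
next
  case False
  then show ?thesis using c the_cell[OF giem_n] scode_Suc entry_Suc[OF x] by simp
qed

lemma codes_agree_Suc:
  assumes "x \<in> {0..<1}" "u \<in> {0..<1}" "\<forall>i\<le>j. scode f P i u = scode f P i x"
    and "entry j u \<in> Dom (Suc j) \<longleftrightarrow> entry j x \<in> Dom (Suc j)"
    and "entry (Suc j) u \<in> F (Suc j) ` Part (Suc j) \<beta>"
    and "entry (Suc j) x \<in> F (Suc j) ` Part (Suc j) \<beta>"
  shows "\<forall>i\<le>Suc j. scode f P i u = scode f P i x"
proof -
  have "scode f P (Suc j) u = scode f P (Suc j) x"
    using scode_Suc_cell[OF assms(2,5)] scode_Suc_cell[OF assms(1,6)] assms(4) by simp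
  then show ?thesis using assms(3) by (auto simp: le_Suc_eq)
qed

lemma cell_predecessor:
  assumes x: "x \<in> {0..<1}" and cx: "entry (Suc j) x \<in> F (Suc j) ` Part (Suc j) \<beta>"
    and cz: "z \<in> F (Suc j) ` Part (Suc j) \<beta>"
  shows "\<exists>\<gamma> z'. entry j x \<in> F j ` Part j \<gamma> \<and> z' \<in> F j ` Part j \<gamma> \<and>
     (z' \<in> Dom (Suc j) \<longleftrightarrow> entry j x \<in> Dom (Suc j)) \<and>
     z = (if z' \<in> Dom (Suc j) then z' else F j z')"
proof (cases "entry j x \<in> Dom (Suc j)")
  case True
  have z: "z \<in> Dom (Suc j)" using cz cell_sub_gdom[OF giem_n] unfolding In_def by blast
  obtain \<gamma> where \<gamma>: "F (Suc j) ` Part (Suc j) \<beta> \<subseteq> F j ` Part j \<gamma>"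
    using cell_Suc_refines by blast
  have "entry (Suc j) x = entry j x" using entry_Suc[OF x, of j] True by simp
  then have "entry j x \<in> F j ` Part j \<gamma> \<and> z \<in> F j ` Part j \<gamma>" using \<gamma> cx cz by auto
  then show ?thesis using True z by (intro exI[of _ \<gamma>] exI[of _ z]) simp
next
  case False
  then have R: "entry j x \<in> Rem j" using entry_in_Dom[OF x] Dom_Suc by blast
  have "entry (Suc j) x = F j (entry j x)" using entry_Suc[OF x, of j] False by simp
  then have "F (Suc j) ` Part (Suc j) \<beta> \<subseteq> F j ` Rem j"
    using cell_Suc_through_removed[OF R] cx by simp
  then obtain z' where z': "z' \<in> Rem j" "z = F j z'" using cz by blast
  have "Rem j \<subseteq> F j ` Part j (alpha1 (F j) (Part j))"
    by (rule removed_sub_alpha1_cell[OF giem_n R_defined_n])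
  moreover have "z' \<notin> Dom (Suc j)" using z'(1) Dom_Suc by blast
  ultimately show ?thesis using R False z'
    by (intro exI[of _ "alpha1 (F j) (Part j)"] exI[of _ z']) auto
qed

text \<open>Fact (a) of the proof idea: every point of the cell of F n containing entry n x is
  the entry point of an orbit whose letters up to time n agree with those of x.\<close>
lemma realize_in_cell:
  "x \<in> {0..<1} \<Longrightarrow> entry n x \<in> F n ` Part n \<beta> \<Longrightarrow> z \<in> F n ` Part n \<beta> \<Longrightarrow>
     \<exists>u\<in>{0..<1}. (\<forall>i\<le>n. scode f P i u = scode f P i x) \<and> entry n u = z"
proof (induction n arbitrary: x \<beta> z)
  case 0
  have "z \<in> {0..<1}"
    using 0 cell_sub_gdom[OF giem_n[of 0]] unfolding renorm_0(1,2) unit_dom by blast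
  moreover have "x \<in> f ` P \<beta>" "z \<in> f ` P \<beta>" using 0 entry_0 renorm_0 by auto
  moreover have "scode f P 0 z = scode f P 0 x" using calculation(2,3) the_cell[OF giem_n[of 0]]
    unfolding renorm_0 by simp
  ultimately show ?case using entry_0[of z] by (intro bexI[of _ z]) auto
next
  case (Suc j)
  obtain \<gamma> z' where pred: "entry j x \<in> F j ` Part j \<gamma>" "z' \<in> F j ` Part j \<gamma>"
      "z' \<in> Dom (Suc j) \<longleftrightarrow> entry j x \<in> Dom (Suc j)"
      "z = (if z' \<in> Dom (Suc j) then z' else F j z')"
    using cell_predecessor[OF Suc.prems] by blast
  then obtain u where u: "u \<in> {0..<1}" "\<forall>i\<le>j. scode f P i u = scode f P i x" "entry j u = z'"
    using Suc.IH[OF Suc.prems(1)] by blast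
  have u_Suc: "entry (Suc j) u = z" using entry_Suc[OF u(1), of j] u(3) pred(4) by simp
  have "\<forall>i\<le>Suc j. scode f P i u = scode f P i x"
    by (rule codes_agree_Suc[OF Suc.prems(1) u(1,2) _ _ Suc.prems(2)])
      (use u(3) pred(3) u_Suc Suc.prems(3) in auto)
  then show ?case using u(1) u_Suc by blast
qed

text \<open>Fact (b) of the proof idea: after time n the coding depends only on entry n.\<close>
lemma entry_agree_later:
  assumes "x \<in> {0..<1}" "u \<in> {0..<1}" "entry n u = entry n x" "n \<le> i"
  shows "entry i u = entry i x"
  using assms(4)
proof (induction i rule: dec_induct)
  case base
  then show ?case using assms(3) .
next
  case (step i)
  then show ?case using entry_Suc[OF assms(1), of i] entry_Suc[OF assms(2), of i] by simp
qed

lemma scode_agree_later: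
  assumes "x \<in> {0..<1}" "u \<in> {0..<1}" "entry n u = entry n x" "n < i"
  shows "scode f P i u = scode f P i x"
proof -
  obtain j where j: "i = Suc j" "n \<le> j" using assms(4) by (cases i) auto
  then show ?thesis using entry_agree_later[OF assms(1-3) j(2)] scode_Suc by simp
qed

lemma boundary_points_countable: "countable (\<Union>n. \<Union>J\<in>tildeP f P n. {Inf J})"
proof -
  have "countable (tildeP f P n)" for n
  proof -
    have "tildeP f P n \<subseteq> (\<Union>\<alpha>. range (\<lambda>i. (f ^^ i) ` Part n \<alpha>))"
      unfolding tildeP_def by blast
    moreover have "countable (\<Union>\<alpha>::'a. range (\<lambda>i. (f ^^ i) ` Part n \<alpha>))" by simp
    ultimately show ?thesis using countable_subset by blast
  qed
  then show ?thesis by simp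
qed

text \<open>Splicing two codings that share the symbol at time n: the set of such spliced
  points maps onto an uncountable cell, so it meets Lambda.\<close>
lemma splice_codes:
  assumes x: "x \<in> {0..<1}" and x': "x' \<in> {0..<1}"
    and same_symbol: "fst (scode f P n x) = fst (scode f P n x')"
  shows "\<exists>u\<in>Lambda f P. (\<forall>i\<le>n. scode f P i u = scode f P i x) \<and>
            (\<forall>i. n < i \<and> i \<le> n + m \<longrightarrow> scode f P i u = scode f P i x')"
proof -
  define N where "N = n + m"
  define T where "T = {u\<in>{0..<1}. (\<forall>i\<le>n. scode f P i u = scode f P i x) \<and>
            (\<forall>i. n < i \<and> i \<le> N \<longrightarrow> scode f P i u = scode f P i x')}"
  define S where "S = F N ` Part N (fst (scode f P N x'))"
  have "S \<subseteq> entry N ` T"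
  proof
    fix w assume "w \<in> S"
    then obtain v where v: "v \<in> {0..<1}" "\<forall>i\<le>N. scode f P i v = scode f P i x'" "entry N v = w"
      using realize_in_cell[OF x' entry_in_coded_cell[OF x']] unfolding S_def by blast
    have "entry n v \<in> F n ` Part n (fst (scode f P n x))"
      using entry_in_coded_cell[OF v(1), of n] v(2) same_symbol unfolding N_def by simp
    then obtain u where u: "u \<in> {0..<1}" "\<forall>i\<le>n. scode f P i u = scode f P i x" "entry n u = entry n v"
      using realize_in_cell[OF x entry_in_coded_cell[OF x]] by blast
    have "u \<in> T"
      using u scode_agree_later[OF v(1) u(1) u(3)] v(2) unfolding T_def by simp
    moreover have "entry N u = w"
      using entry_agree_later[OF v(1) u(1) u(3), of N] v(3) unfolding N_def by simp
    ultimately show "w \<in> entry N ` T" by blast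
  qed
  moreover have "uncountable S" unfolding S_def by (rule cell_uncountable[OF giem_n])
  ultimately have "uncountable T" using countable_image countable_subset by metis
  then have "\<not> T \<subseteq> (\<Union>n. \<Union>J\<in>tildeP f P n. {Inf J})"
    using boundary_points_countable countable_subset by blast
  then obtain u where "u \<in> T" "u \<notin> (\<Union>n. \<Union>J\<in>tildeP f P n. {Inf J})" by blast
  then have "u \<in> Lambda f P" "u \<in> T" unfolding Lambda_def T_def by auto
  then show ?thesis unfolding T_def N_def by blast
qed

end

lemma coded_point_of_admissible:
  assumes "admissible f P (w ` S)" "\<forall>i\<in>S. lidx (w i) = i"
  shows "\<exists>x\<in>Lambda f P. \<forall>i\<in>S. scode f P i x = w i"
proof -
  have "{x \<in> Lambda f P. \<forall>l\<in>w ` S. scode f P (lidx l) x = l} \<noteq> {}"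
    using assms(1) closure_empty unfolding admissible_def cylinder_def by metis
  then obtain x where "x \<in> Lambda f P" "\<forall>l\<in>w ` S. scode f P (lidx l) x = l" by blast
  moreover have "scode f P i x = w i" if "i \<in> S" for i
    using calculation(2) assms(2) that by (metis image_eqI)
  ultimately show ?thesis by blast
qed

lemma admissible_of_coded_point:
  assumes "finite S" "\<forall>i\<in>S. lidx (w i) = i"
    and "x \<in> Lambda f P" "\<forall>i\<in>S. scode f P i x = w i"
  shows "admissible f P (w ` S)"
proof -
  have "x \<in> {x \<in> Lambda f P. \<forall>l\<in>w ` S. scode f P (lidx l) x = l}"
    using assms(2-4) by simp
  then have "cylinder f P (w ` S) \<noteq> {}" unfolding cylinder_def using closure_subset by blast
  moreover have "inj_on lidx (w ` S)"
  proof (rule inj_onI)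
    fix l l' assume "l \<in> w ` S" "l' \<in> w ` S" "lidx l = lidx l'"
    then show "l = l'" using assms(2) by auto
  qed
  ultimately show ?thesis using assms(1) by (simp add: admissible_def is_word_def)
qed

lemma admissible_splice:
  assumes "k' \<le> n" "\<forall>i\<in>{k'..n}. lidx (a i) = i" "\<forall>i\<in>{n..n+m}. lidx (a' i) = i"
    and "u \<in> Lambda f P"
    and "\<forall>i\<in>{k'..n}. scode f P i u = a i" "\<forall>i\<in>{n+1..n+m}. scode f P i u = a' i"
  shows "admissible f P (a ` {k'..n} \<union> a' ` {n+1..n+m})"
proof -
  define w where "w i = (if i \<le> n then a i else a' i)" for i
  have "w ` {k'..n} = a ` {k'..n}" "w ` {n+1..n+m} = a' ` {n+1..n+m}"
    by (auto simp: w_def intro!: image_cong)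
  moreover have "{k'..n+m} = {k'..n} \<union> {n+1..n+m}" using assms(1) by auto
  ultimately have word: "a ` {k'..n} \<union> a' ` {n+1..n+m} = w ` {k'..n+m}" by (simp add: image_Un)
  have "lidx (w i) = i \<and> scode f P i u = w i" if "i \<in> {k'..n+m}" for i
    using assms(2,3,5,6) that by (cases "i \<le> n") (auto simp: w_def)
  then have "admissible f P (w ` {k'..n+m})"
    using admissible_of_coded_point[OF _ _ assms(4)] by simp
  then show ?thesis using word by simp
qed

theorem lemma4p4:
  fixes f :: "real \<Rightarrow> real" and P :: "'a::finite \<Rightarrow> real set"
    and k :: nat and \<nu> :: real and k' n m :: nat
    and a a' :: "nat \<Rightarrow> 'a letter"
  assumes "0 < \<nu>"
    and "in_B k \<nu> f P"
    and "gdom P = {0..<1}"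
    and "k' \<le> n"
    and "\<forall>i\<in>{k'..n}. lidx (a i) = i"
    and "\<forall>i\<in>{n..n+m}. lidx (a' i) = i"
    and "admissible f P (a ` {k'..n})"
    and "admissible f P (a' ` {n..n+m})"
    and "lsym (a n) = lsym (a' n)"
  shows "admissible f P (a ` {k'..n} \<union> a' ` {n+1..n+m})"
proof -
  interpret unit_renormalizable f P
    using assms(2,3) by unfold_locales (simp add: in_B_def bounded_comb_def)
  obtain x where x: "x \<in> Lambda f P" "\<forall>i\<in>{k'..n}. scode f P i x = a i"
    using coded_point_of_admissible[OF assms(7,5)] by blast
  obtain x' where x': "x' \<in> Lambda f P" "\<forall>i\<in>{n..n+m}. scode f P i x' = a' i"
    using coded_point_of_admissible[OF assms(8,6)] by blast
  have same_symbol: "fst (scode f P n x) = fst (scode f P n x')"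
    using x(2) x'(2) assms(4,9) by (simp add: lsym_def)
  have "x \<in> {0..<1}" "x' \<in> {0..<1}" using x(1) x'(1) by (auto simp: Lambda_def)
  then obtain u where u: "u \<in> Lambda f P" "\<forall>i\<le>n. scode f P i u = scode f P i x"
     "\<forall>i. n < i \<and> i \<le> n + m \<longrightarrow> scode f P i u = scode f P i x'"
    using splice_codes[OF _ _ same_symbol] by blast
  show ?thesis
    by (rule admissible_splice[OF assms(4-6) u(1)]) (use x(2) x'(2) u(2,3) in auto)
qed

end
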